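(* Let $\omega>\gamma^2/4$. There exists $\eta>0$ (small) such that for $\alpha=0,1$, $\|Q_{\omega,\gamma}^{-1}e^{\eta|x|}\partial_x^\alpha\mathcal{Y}_\pm\|_{L^\infty(\mathbb{R}\setminus\{0\})}<\infty$.
   Context: Fix $\gamma<0$, $p>5$, $\omega>\gamma^2/4$, and $Q_{\omega,\gamma}(x)=\big[\tfrac{(p+1)\omega}{2}\operatorname{sech}^2\big(\tfrac{(p-1)\sqrt\omega}{2}|x|+\tanh^{-1}(\tfrac{\gamma}{2\sqrt\omega})\big)\big]^{1/(p-1)}$ (positive, decaying like $e^{-\sqrt\omega|x|}$). Let $\mathcal D_{\mathrm{even}}=\{f\in H^1(\mathbb{R})\cap H^2(\mathbb{R}\setminus\{0\})\text{ even}: f'(0+)-f'(0-)=-\gamma f(0)\}$, and on real functions in $\mathcal D_{\mathrm{even}}$ let $L^-f=-f''+\omega f-Q_{\omega,\gamma}^{p-1}f$, $L^+f=-f''+\omega f-pQ_{\omega,\gamma}^{p-1}f$. For $f=f_1+if_2$ set $\mathcal{L}f=-L^-f_2+iL^+f_1$. $\mathcal{Y}_+=\mathcal Y_1+i\mathcal Y_2$ ($\mathcal Y_j\in\mathcal D_{\mathrm{even}}$ real) is the eigenfunction of $\mathcal L$ for its simple positive eigenvalue $e_\omega>0$ on even functions, i.e. $L^+\mathcal{Y}_1=e_\omega\mathcal{Y}_2$, $L^-\mathcal{Y}_2=-e_\omega\mathcal{Y}_1$; $\mathcal Y_-=\overline{\mathcal Y_+}$. The derivative $\partial_x\mathcal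 Y_\pm$ is taken on $\mathbb{R}\setminus\{0\}$. *)

theory Defs
  imports "HOL-Analysis.Analysis"
begin

definition Qwg :: "real \<Rightarrow> real \<Rightarrow> real \<Rightarrow> real \<Rightarrow> real" where
  "Qwg p \<omega> \<gamma> x =
     ((p + 1) * \<omega> / 2 *
        (1 / cosh ((p - 1) * sqrt \<omega> / 2 * \<bar>x\<bar> + artanh (\<gamma> / (2 * sqrt \<omega>)))) ^ 2)
     powr (1 / (p - 1))"

text \<open>Even domain D_even (continuous representative; classical derivatives on R minus 0,
  L2-integrability of f, f', f'' expresses membership in H1(R) and H2(R minus 0);
  the jump condition uses the one-sided limits of f' at 0).\<close>
definition D_even :: "real \<Rightarrow> (real \<Rightarrow> real) \<Rightarrow> bool" where
  "D_even \<gamma> f \<longleftrightarrow>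
     continuous_on UNIV f \<and> (\<forall>x. f (- x) = f x) \<and>
     (\<forall>x. x \<noteq> 0 \<longrightarrow> f differentiable (at x) \<and> deriv f differentiable (at x)) \<and>
     integrable lborel (\<lambda>x. (f x)\<^sup>2) \<and>
     set_integrable lborel (UNIV - {0}) (\<lambda>x. (deriv f x)\<^sup>2) \<and>
     set_integrable lborel (UNIV - {0}) (\<lambda>x. (deriv (deriv f) x)\<^sup>2) \<and>
     (\<exists>a b. (deriv f \<longlongrightarrow> a) (at_right 0) \<and> (deriv f \<longlongrightarrow> b) (at_left 0) \<and>
            a - b = - \<gamma> * f 0)"

definition Lminus :: "real \<Rightarrow> real \<Rightarrow> real \<Rightarrow> (real \<Rightarrow> real) \<Rightarrow> real \<Rightarrow> real" where
  "Lminus p \<omega> \<gamma> f x = - deriv (deriv f) x + \<omega> * f x - (Qwg p \<omega> \<gamma> x) powr (p - 1) * f x"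

definition Lplus :: "real \<Rightarrow> real \<Rightarrow> real \<Rightarrow> (real \<Rightarrow> real) \<Rightarrow> real \<Rightarrow> real" where
  "Lplus p \<omega> \<gamma> f x = - deriv (deriv f) x + \<omega> * f x - p * (Qwg p \<omega> \<gamma> x) powr (p - 1) * f x"

text \<open>(f1 + i f2) is an even eigenfunction of the linearized operator with eigenvalue lam:
  Lplus f1 = lam f2 and Lminus f2 = - lam f1 (on R minus 0).\<close>
definition even_eigpair :: "real \<Rightarrow> real \<Rightarrow> real \<Rightarrow> real \<Rightarrow> (real \<Rightarrow> real) \<Rightarrow> (real \<Rightarrow> real) \<Rightarrow> bool" where
  "even_eigpair p \<omega> \<gamma> lam f1 f2 \<longleftrightarrow>
     D_even \<gamma> f1 \<and> D_even \<gamma> f2 \<and> (\<exists>x. f1 x \<noteq> 0 \<or> f2 x \<noteq> 0) \<and>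
     (\<forall>x. x \<noteq> 0 \<longrightarrow> Lplus p \<omega> \<gamma> f1 x = lam * f2 x \<and> Lminus p \<omega> \<gamma> f2 x = - lam * f1 x)"

end

theory Submission
  imports Defs "HOL-Real_Asymp.Real_Asymp"
begin

text \<open>Away from the origin the eigenvalue equations say that \<open>Y = Y1 + i Y2\<close> solves
  \<open>Y'' = k\<^sup>2 Y - F\<close> with \<open>k\<^sup>2 = \<omega> + i e\<close> and \<open>F = p V Y1 + i V Y2\<close>, \<open>V = Q powr (p - 1) \<rightarrow> 0\<close>.
  Because \<open>e > 0\<close>, \<open>Re k > sqrt \<omega>\<close>. The moduli \<open>|Y' + k Y|\<^sup>2\<close> and \<open>|Y' - k Y|\<^sup>2\<close> grow resp.
  decay at rate \<open>2 Re k\<close> up to errors of size \<open>O(V)\<close>; square integrability forbids the growing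
  mode, so far out \<open>Y\<close> and \<open>Y'\<close> decay like \<open>exp (- s x)\<close> for some \<open>s > sqrt \<omega>\<close>. Near the
  origin \<open>Y\<close> and \<open>Y'\<close> are bounded, evenness covers \<open>x < 0\<close>, and since
  \<open>Q \<ge> c exp (- sqrt \<omega> |x|)\<close> the weight \<open>exp (\<eta> |x|) / Q\<close> with \<open>\<eta> = s - sqrt \<omega>\<close> is absorbed.\<close>

lemma square_sum_products_le:
  "((u1::real) * v1 + u2 * v2)\<^sup>2 \<le> (u1\<^sup>2 + u2\<^sup>2) * (v1\<^sup>2 + v2\<^sup>2)"
proof -
  have "0 \<le> (u1 * v2 - u2 * v1)\<^sup>2" by simp
  thus ?thesis by (simp add: power2_eq_square algebra_simps)
qed

lemma set_integrable_atLeast_not_bounded_below: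
  fixes g :: "real \<Rightarrow> real"
  assumes int: "set_integrable lborel {R..} g" and "R \<le> x" and d: "0 < d"
  shows "\<not> (\<forall>y\<ge>x. d \<le> g y)"
proof
  assume ge: "\<forall>y\<ge>x. d \<le> g y"
  have "integrable lborel (\<lambda>y. indicator {x..} y * d :: real)"
    using int[unfolded set_integrable_def]
  proof (rule Bochner_Integration.integrable_bound)
    show "AE y in lborel. norm (indicator {x..} y * d :: real) \<le> norm (indicator {R..} y *\<^sub>R g y)"
      using ge d \<open>R \<le> x\<close> by (intro AE_I2) (auto simp: indicator_def)
  qed simp
  hence "integrable lborel (indicator {x..} :: real \<Rightarrow> real)"
    using integrable_divide[of lborel "\<lambda>y. indicator {x..} y * d" d] d by simp
  hence "emeasure lborel {x..} < \<infinity>" by (simp add: integrable_indicator_iff)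
  then obtain m where m: "emeasure lborel {x..} = ennreal m" "m \<ge> 0"
    by (metis ennreal_cases infinity_ennreal_def less_irrefl)
  have "ennreal (m + 1) = emeasure lborel {x..x + (m + 1)}" using m by simp
  also have "\<dots> \<le> emeasure lborel {x..}" by (intro emeasure_mono) auto
  finally show False using m by simp
qed

lemma exp_weighted_antimono:
  fixes f f' :: "real \<Rightarrow> real"
  assumes deriv: "\<And>t. t \<ge> R \<Longrightarrow> (f has_real_derivative f' t) (at t)"
    and le: "\<And>t. t \<ge> R \<Longrightarrow> f' t \<le> - c * f t" and "R \<le> x"
  shows "f x * exp (c * x) \<le> f R * exp (c * R)"
proof -
  have "(\<lambda>t. - (f t * exp (c * t))) R \<le> (\<lambda>t. - (f t * exp (c * t))) x"
  proof (rule deriv_nonneg_imp_mono[OF _ _ \<open>R \<le> x\<close>])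
    fix t assume "t \<in> {R..x}"
    hence t: "t \<ge> R" by simp
    show "((\<lambda>t. - (f t * exp (c * t))) has_real_derivative
        - (f' t * exp (c * t) + f t * (exp (c * t) * c))) (at t)"
      by (auto intro!: derivative_eq_intros deriv t)
    have "(f' t + c * f t) * exp (c * t) \<le> 0"
      using le[OF t] by (intro mult_nonpos_nonneg) auto
    thus "0 \<le> - (f' t * exp (c * t) + f t * (exp (c * t) * c))"
      by (simp add: algebra_simps)
  qed
  thus ?thesis by simp
qed

lemma deriv_even_fun:
  fixes f :: "real \<Rightarrow> real"
  assumes even: "\<And>x. f (- x) = f x" and "f differentiable (at (- x))"
  shows "deriv f x = - deriv f (- x)"
proof -
  have "(f has_real_derivative deriv f (- x)) (at (- x))"
    using assms(2) by (simp add: DERIV_deriv_iff_real_differentiable)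
  hence "((\<lambda>t. f (- t)) has_real_derivative deriv f (- x) * - 1) (at x)"
    by (intro DERIV_chain2[where g = uminus]) (auto intro!: derivative_eq_intros)
  moreover have "(\<lambda>t. f (- t)) = f" using even by auto
  ultimately show ?thesis by (simp add: DERIV_imp_deriv)
qed

lemma continuous_on_Icc_abs_bounded:
  fixes g :: "real \<Rightarrow> real"
  assumes "continuous_on {a..b} g"
  obtains B where "\<And>x. x \<in> {a..b} \<Longrightarrow> \<bar>g x\<bar> \<le> B"
proof -
  have "bounded (g ` {a..b})" by (intro compact_imp_bounded compact_continuous_image assms) auto
  then obtain B where B: "\<forall>y\<in>g ` {a..b}. norm y \<le> B" by (auto simp: bounded_iff)
  show ?thesis by (rule that[of B]) (use B in auto)
qed

lemma tendsto_at_right_0_abs_bounded: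
  fixes g :: "real \<Rightarrow> real"
  assumes lim: "(g \<longlongrightarrow> a) (at_right 0)" and cont: "\<And>x. x > 0 \<Longrightarrow> isCont g x"
  obtains B where "\<And>x. x \<in> {0<..R} \<Longrightarrow> \<bar>g x\<bar> \<le> B"
proof -
  have "\<forall>\<^sub>F x in at_right 0. dist (g x) a < 1" using lim by (rule tendstoD) simp
  then obtain b where b: "b > 0" "\<And>y. y > 0 \<Longrightarrow> y < b \<Longrightarrow> dist (g y) a < 1"
    unfolding eventually_at_right_field by auto
  have "continuous_on {b / 2..R} g" using b cont by (intro continuous_at_imp_continuous_on) auto
  then obtain B where B: "\<And>x. x \<in> {b / 2..R} \<Longrightarrow> \<bar>g x\<bar> \<le> B"
    using continuous_on_Icc_abs_bounded by blast
  show ?thesis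
  proof (rule that[of "max B (\<bar>a\<bar> + 1)"])
    fix x assume x: "x \<in> {0<..R}"
    show "\<bar>g x\<bar> \<le> max B (\<bar>a\<bar> + 1)"
    proof (cases "x < b")
      case True
      hence "dist (g x) a < 1" using b x by auto
      thus ?thesis by (auto simp: dist_real_def)
    next
      case False
      thus ?thesis using B[of x] x b by auto
    qed
  qed
qed

lemma exp_bound_off_zero:
  fixes f :: "real \<Rightarrow> real"
  assumes even: "\<And>x. f (- x) = f x" and far: "\<And>x. x \<ge> R \<Longrightarrow> f x \<le> C * exp (- c * x)"
    and near: "\<And>x. x \<in> {0<..R} \<Longrightarrow> f x \<le> B" and "0 \<le> c"
  shows "\<exists>M. \<forall>x. x \<noteq> 0 \<longrightarrow> f x \<le> M * exp (- c * \<bar>x\<bar>)"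
proof -
  define M where "M = max C (\<bar>B\<bar> * exp (c * R))"
  have pos: "f x \<le> M * exp (- c * x)" if "x > 0" for x
  proof (cases "x \<ge> R")
    case True
    have "C * exp (- c * x) \<le> M * exp (- c * x)" by (intro mult_right_mono) (auto simp: M_def)
    thus ?thesis using far[OF True] by linarith
  next
    case False
    have "\<bar>B\<bar> = \<bar>B\<bar> * 1" by simp
    also have "\<dots> \<le> \<bar>B\<bar> * exp (c * (R - x))"
      using False \<open>0 \<le> c\<close> by (intro mult_left_mono) auto
    also have "\<dots> = \<bar>B\<bar> * exp (c * R) * exp (- c * x)"
      by (simp add: mult.assoc right_diff_distrib flip: exp_add)
    also have "\<dots> \<le> M * exp (- c * x)" by (intro mult_right_mono) (auto simp: M_def)
    finally show ?thesis using near[of x] \<open>x > 0\<close> False by auto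
  qed
  have "f x \<le> M * exp (- c * \<bar>x\<bar>)" if "x \<noteq> 0" for x
    using pos[of x] pos[of "- x"] even[of x] that by (cases "x > 0") auto
  thus ?thesis by blast
qed

lemma exp_weighted_bound:
  fixes u v Q :: "real \<Rightarrow> real"
  assumes uv: "\<forall>x. x \<noteq> 0 \<longrightarrow> (u x)\<^sup>2 + (v x)\<^sup>2 \<le> C * exp (- (2 * s) * \<bar>x\<bar>)"
    and "c > 0" and Q: "\<And>x. c * exp (- w * \<bar>x\<bar>) \<le> Q x"
  shows "\<exists>M. \<forall>x. x \<noteq> 0 \<longrightarrow> exp ((s - w) * \<bar>x\<bar>) / Q x * sqrt ((u x)\<^sup>2 + (v x)\<^sup>2) \<le> M"
proof (intro exI allI impI)
  fix x :: real assume x: "x \<noteq> 0"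
  have "0 \<le> C * exp (- (2 * s) * \<bar>1\<bar>)"
    using uv[rule_format, of 1] by (smt (verit) zero_le_power2)
  hence C: "0 \<le> C" by (simp add: zero_le_mult_iff)
  have "sqrt ((u x)\<^sup>2 + (v x)\<^sup>2) \<le> sqrt (C * exp (- (2 * s) * \<bar>x\<bar>))" using uv x by simp
  also have "\<dots> = sqrt (C * (exp (- s * \<bar>x\<bar>))\<^sup>2)"
    by (simp add: power2_eq_square flip: exp_add)
  also have "\<dots> = sqrt C * exp (- s * \<bar>x\<bar>)" by (simp add: real_sqrt_mult)
  finally have sq: "sqrt ((u x)\<^sup>2 + (v x)\<^sup>2) \<le> sqrt C * exp (- s * \<bar>x\<bar>)" .
  have Qpos: "0 < Q x" using Q[of x] \<open>c > 0\<close> by (smt (verit) exp_gt_zero mult_pos_pos)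
  have "exp ((s - w) * \<bar>x\<bar>) / Q x \<le> exp ((s - w) * \<bar>x\<bar>) / (c * exp (- w * \<bar>x\<bar>))"
    using Q[of x] \<open>c > 0\<close> Qpos by (intro divide_left_mono) auto
  hence "exp ((s - w) * \<bar>x\<bar>) / Q x * sqrt ((u x)\<^sup>2 + (v x)\<^sup>2)
      \<le> exp ((s - w) * \<bar>x\<bar>) / (c * exp (- w * \<bar>x\<bar>)) * (sqrt C * exp (- s * \<bar>x\<bar>))"
    using sq Qpos \<open>c > 0\<close> by (intro mult_mono) auto
  also have "\<dots> = sqrt C / c"
    using \<open>c > 0\<close> by (simp add: exp_minus field_simps flip: exp_add)
  finally show "exp ((s - w) * \<bar>x\<bar>) / Q x * sqrt ((u x)\<^sup>2 + (v x)\<^sup>2) \<le> sqrt C / c" .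
qed

lemma norm_of_real_mult_Complex:
  assumes "0 \<le> r"
  shows "norm (complex_of_real r * Complex a b) = r * sqrt (a\<^sup>2 + b\<^sup>2)"
    and "norm (complex_of_real r * cnj (Complex a b)) = r * sqrt (a\<^sup>2 + b\<^sup>2)"
  using assms by (simp_all add: norm_mult complex_norm)

text \<open>\<open>kr + i ki\<close> is the principal square root of \<open>\<omega> + i e\<close>; since \<open>e \<noteq> 0\<close>, its
  real part exceeds \<open>sqrt \<omega>\<close>: this gap is the source of the extra decay rate \<open>\<eta>\<close>.\<close>

lemma sqrt_complex_Re_gt:
  fixes \<omega> e :: real
  assumes "\<omega> > 0" and "e \<noteq> 0"
  obtains kr ki where "kr\<^sup>2 - ki\<^sup>2 = \<omega>" and "2 * kr * ki = e" and "sqrt \<omega> < kr"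
proof
  define k where "k = csqrt (Complex \<omega> e)"
  have "Re (k\<^sup>2) = \<omega>" "Im (k\<^sup>2) = e" unfolding k_def by simp_all
  thus re: "(Re k)\<^sup>2 - (Im k)\<^sup>2 = \<omega>" and im: "2 * Re k * Im k = e"
    by (simp_all add: power2_eq_square algebra_simps)
  have "Im k \<noteq> 0" using im \<open>e \<noteq> 0\<close> by auto
  hence "\<omega> < (Re k)\<^sup>2" using re by (simp add: algebra_simps)
  moreover have "0 \<le> Re k" unfolding k_def by (rule Re_csqrt)
  ultimately show "sqrt \<omega> < Re k" by (simp add: real_less_lsqrt)
qed

section \<open>Exponential decay for a perturbed linear system\<close>

locale perturbed_linear_system =
  fixes Y1 Y2 Y1' Y2' Y1'' Y2'' V :: "real \<Rightarrow> real" and kr ki p \<epsilon> s R :: real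
  assumes kr_pos: "kr > 0" and p_ge_1: "p \<ge> 1"
    and eps_nonneg: "0 \<le> \<epsilon>" and s_nonneg: "0 \<le> s" and eps_le: "2 * \<epsilon> \<le> kr - s"
    and Y1_deriv: "\<And>x. x \<ge> R \<Longrightarrow> (Y1 has_real_derivative Y1' x) (at x)"
    and Y2_deriv: "\<And>x. x \<ge> R \<Longrightarrow> (Y2 has_real_derivative Y2' x) (at x)"
    and Y1'_deriv: "\<And>x. x \<ge> R \<Longrightarrow> (Y1' has_real_derivative Y1'' x) (at x)"
    and Y2'_deriv: "\<And>x. x \<ge> R \<Longrightarrow> (Y2' has_real_derivative Y2'' x) (at x)"
    and ode1: "\<And>x. x \<ge> R \<Longrightarrow> Y1'' x = (kr\<^sup>2 - ki\<^sup>2) * Y1 x - 2 * kr * ki * Y2 x - p * V x * Y1 x"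
    and ode2: "\<And>x. x \<ge> R \<Longrightarrow> Y2'' x = (kr\<^sup>2 - ki\<^sup>2) * Y2 x + 2 * kr * ki * Y1 x - V x * Y2 x"
    and V_nonneg: "\<And>x. x \<ge> R \<Longrightarrow> 0 \<le> V x"
    and V_small: "\<And>x. x \<ge> R \<Longrightarrow> p * V x \<le> \<epsilon> * kr"
    and energy_integrable:
      "set_integrable lborel {R..} (\<lambda>x. (Y1 x)\<^sup>2 + (Y2 x)\<^sup>2 + (Y1' x)\<^sup>2 + (Y2' x)\<^sup>2)"
begin

text \<open>With \<open>Y = Y1 + i Y2\<close> and \<open>k = kr + i ki\<close> the system reads \<open>Y'' = k\<^sup>2 Y - F\<close> with
  \<open>F = p V Y1 + i V Y2\<close>. The functions below are the real and imaginary parts of \<open>Y' + k Y\<close>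
  and \<open>Y' - k Y\<close>; their squared moduli grow resp. decay like \<open>exp (\<plusminus>2 kr x)\<close>, up to
  an error controlled by \<open>\<epsilon>\<close>.\<close>

definition "Ap_re x = Y1' x + kr * Y1 x - ki * Y2 x"
definition "Ap_im x = Y2' x + kr * Y2 x + ki * Y1 x"
definition "Am_re x = Y1' x - kr * Y1 x + ki * Y2 x"
definition "Am_im x = Y2' x - kr * Y2 x - ki * Y1 x"
definition "F_re x = p * V x * Y1 x"
definition "F_im x = V x * Y2 x"
definition "amp_plus x = (Ap_re x)\<^sup>2 + (Ap_im x)\<^sup>2"
definition "amp_minus x = (Am_re x)\<^sup>2 + (Am_im x)\<^sup>2"

lemma amp_nonneg: "0 \<le> amp_plus x" "0 \<le> amp_minus x"
  unfolding amp_plus_def amp_minus_def by auto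

lemma amp_components_le:
  "(Ap_re x)\<^sup>2 + (Ap_im x)\<^sup>2 \<le> amp_plus x + amp_minus x"
  "(Am_re x)\<^sup>2 + (Am_im x)\<^sup>2 \<le> amp_plus x + amp_minus x"
  using amp_nonneg[of x] by (simp_all add: amp_plus_def amp_minus_def)

lemma amp_plus_deriv:
  assumes x: "x \<ge> R"
  shows "(amp_plus has_real_derivative
           2 * kr * amp_plus x - 2 * (Ap_re x * F_re x + Ap_im x * F_im x)) (at x)"
proof -
  have "(amp_plus has_real_derivative 2 * Ap_re x * (Y1'' x + kr * Y1' x - ki * Y2' x)
          + 2 * Ap_im x * (Y2'' x + kr * Y2' x + ki * Y1' x)) (at x)"
    unfolding amp_plus_def[abs_def] Ap_re_def[abs_def] Ap_im_def[abs_def]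
    by (auto intro!: derivative_eq_intros Y1_deriv Y2_deriv Y1'_deriv Y2'_deriv x
        simp: algebra_simps)
  thus ?thesis
    unfolding ode1[OF x] ode2[OF x]
    by (simp add: amp_plus_def Ap_re_def Ap_im_def F_re_def F_im_def power2_eq_square algebra_simps)
qed

lemma amp_minus_deriv:
  assumes x: "x \<ge> R"
  shows "(amp_minus has_real_derivative
           - 2 * kr * amp_minus x - 2 * (Am_re x * F_re x + Am_im x * F_im x)) (at x)"
proof -
  have "(amp_minus has_real_derivative 2 * Am_re x * (Y1'' x - kr * Y1' x + ki * Y2' x)
          + 2 * Am_im x * (Y2'' x - kr * Y2' x - ki * Y1' x)) (at x)"
    unfolding amp_minus_def[abs_def] Am_re_def[abs_def] Am_im_def[abs_def]
    by (auto intro!: derivative_eq_intros Y1_deriv Y2_deriv Y1'_deriv Y2'_deriv x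
        simp: algebra_simps)
  thus ?thesis
    unfolding ode1[OF x] ode2[OF x]
    by (simp add: amp_minus_def Am_re_def Am_im_def F_re_def F_im_def power2_eq_square algebra_simps)
qed

lemma Y_sq_le_amp: "2 * kr\<^sup>2 * ((Y1 x)\<^sup>2 + (Y2 x)\<^sup>2) \<le> amp_plus x + amp_minus x"
proof -
  have "4 * kr\<^sup>2 * ((Y1 x)\<^sup>2 + (Y2 x)\<^sup>2) \<le> 4 * (kr\<^sup>2 + ki\<^sup>2) * ((Y1 x)\<^sup>2 + (Y2 x)\<^sup>2)"
    by (intro mult_right_mono) auto
  also have "\<dots> = (Ap_re x - Am_re x)\<^sup>2 + (Ap_im x - Am_im x)\<^sup>2"
    unfolding Ap_re_def Am_re_def Ap_im_def Am_im_def by (simp add: power2_eq_square algebra_simps)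
  also have "\<dots> \<le> 2 * (amp_plus x + amp_minus x)"
    unfolding amp_plus_def amp_minus_def
    using sum_squares_ge_zero[of "Ap_re x + Am_re x" "Ap_im x + Am_im x"]
    by (simp add: power2_eq_square algebra_simps)
  finally show ?thesis by simp
qed

lemma Y'_sq_le_amp: "2 * ((Y1' x)\<^sup>2 + (Y2' x)\<^sup>2) \<le> amp_plus x + amp_minus x"
proof -
  have "(Ap_re x + Am_re x)\<^sup>2 + (Ap_im x + Am_im x)\<^sup>2 = 4 * ((Y1' x)\<^sup>2 + (Y2' x)\<^sup>2)"
    unfolding Ap_re_def Am_re_def Ap_im_def Am_im_def by (simp add: power2_eq_square algebra_simps)
  moreover have "(Ap_re x + Am_re x)\<^sup>2 + (Ap_im x + Am_im x)\<^sup>2 \<le> 2 * (amp_plus x + amp_minus x)"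
    unfolding amp_plus_def amp_minus_def
    using sum_squares_ge_zero[of "Ap_re x - Am_re x" "Ap_im x - Am_im x"]
    by (simp add: power2_eq_square algebra_simps)
  ultimately show ?thesis by argo
qed

lemma forcing_sq_le:
  assumes x: "x \<ge> R"
  shows "(F_re x)\<^sup>2 + (F_im x)\<^sup>2 \<le> \<epsilon>\<^sup>2 * (amp_plus x + amp_minus x)"
proof -
  have V: "0 \<le> V x" "p * V x \<le> \<epsilon> * kr" using V_nonneg[OF x] V_small[OF x] by auto
  have "(V x)\<^sup>2 \<le> (p * V x)\<^sup>2"
    using p_ge_1 V mult_right_mono[of 1 p "V x"] by (intro power_mono) auto
  hence "(F_re x)\<^sup>2 + (F_im x)\<^sup>2 \<le> (p * V x)\<^sup>2 * ((Y1 x)\<^sup>2 + (Y2 x)\<^sup>2)"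
    using mult_right_mono[of "(V x)\<^sup>2" "(p * V x)\<^sup>2" "(Y2 x)\<^sup>2"]
    unfolding F_re_def F_im_def by (simp add: algebra_simps)
  also have "\<dots> \<le> (\<epsilon> * kr)\<^sup>2 * ((Y1 x)\<^sup>2 + (Y2 x)\<^sup>2)"
    using V p_ge_1 by (intro mult_right_mono power_mono) auto
  also have "\<dots> = \<epsilon>\<^sup>2 / 2 * (2 * kr\<^sup>2 * ((Y1 x)\<^sup>2 + (Y2 x)\<^sup>2))" by (simp add: power_mult_distrib)
  also have "\<dots> \<le> \<epsilon>\<^sup>2 / 2 * (amp_plus x + amp_minus x)" using Y_sq_le_amp by (intro mult_left_mono) auto
  also have "\<dots> \<le> \<epsilon>\<^sup>2 * (amp_plus x + amp_minus x)" using amp_nonneg[of x] by (intro mult_right_mono) auto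
  finally show ?thesis .
qed

lemma forcing_pairing_le:
  assumes x: "x \<ge> R" and a: "a1\<^sup>2 + a2\<^sup>2 \<le> amp_plus x + amp_minus x"
  shows "\<bar>a1 * F_re x + a2 * F_im x\<bar> \<le> \<epsilon> * (amp_plus x + amp_minus x)"
proof -
  have nonneg: "0 \<le> \<epsilon> * (amp_plus x + amp_minus x)" using eps_nonneg amp_nonneg[of x] by auto
  have "(a1 * F_re x + a2 * F_im x)\<^sup>2 \<le> (a1\<^sup>2 + a2\<^sup>2) * ((F_re x)\<^sup>2 + (F_im x)\<^sup>2)"
    by (rule square_sum_products_le)
  also have "\<dots> \<le> (amp_plus x + amp_minus x) * (\<epsilon>\<^sup>2 * (amp_plus x + amp_minus x))"
    using a forcing_sq_le[OF x] amp_nonneg[of x] by (intro mult_mono) auto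
  also have "\<dots> = (\<epsilon> * (amp_plus x + amp_minus x))\<^sup>2" by (simp add: power2_eq_square)
  finally show ?thesis using power2_le_iff_abs_le[OF nonneg] by blast
qed

lemma amp_diff_mono:
  assumes "R \<le> x" "x \<le> y"
  shows "amp_plus x - amp_minus x \<le> amp_plus y - amp_minus y"
proof (rule deriv_nonneg_imp_mono[OF _ _ \<open>x \<le> y\<close>])
  fix t assume "t \<in> {x..y}"
  hence t: "t \<ge> R" using assms by simp
  show "((\<lambda>t. amp_plus t - amp_minus t) has_real_derivative
      (2 * kr * amp_plus t - 2 * (Ap_re t * F_re t + Ap_im t * F_im t))
      - (- 2 * kr * amp_minus t - 2 * (Am_re t * F_re t + Am_im t * F_im t))) (at t)"
    by (intro derivative_intros amp_plus_deriv amp_minus_deriv t)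
  have "\<bar>Ap_re t * F_re t + Ap_im t * F_im t\<bar> \<le> \<epsilon> * (amp_plus t + amp_minus t)"
    "\<bar>Am_re t * F_re t + Am_im t * F_im t\<bar> \<le> \<epsilon> * (amp_plus t + amp_minus t)"
    using forcing_pairing_le[OF t amp_components_le(1)] forcing_pairing_le[OF t amp_components_le(2)]
    by auto
  moreover have "4 * \<epsilon> * (amp_plus t + amp_minus t) \<le> 2 * kr * (amp_plus t + amp_minus t)"
    using eps_le s_nonneg amp_nonneg[of t] by (intro mult_right_mono) auto
  ultimately show "0 \<le> (2 * kr * amp_plus t - 2 * (Ap_re t * F_re t + Ap_im t * F_im t))
      - (- 2 * kr * amp_minus t - 2 * (Am_re t * F_re t + Am_im t * F_im t))"
    by (simp add: abs_le_iff algebra_simps)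
qed

lemma amp_plus_le_energy:
  "amp_plus x \<le> 3 * (1 + kr\<^sup>2 + ki\<^sup>2) * ((Y1 x)\<^sup>2 + (Y2 x)\<^sup>2 + (Y1' x)\<^sup>2 + (Y2' x)\<^sup>2)"
proof -
  have "(Ap_re x)\<^sup>2 \<le> 3 * ((Y1' x)\<^sup>2 + kr\<^sup>2 * (Y1 x)\<^sup>2 + ki\<^sup>2 * (Y2 x)\<^sup>2)"
    unfolding Ap_re_def using sum_squares_ge_zero[of "Y1' x - kr * Y1 x" "Y1' x + ki * Y2 x"]
      sum_squares_ge_zero[of "kr * Y1 x + ki * Y2 x" 0]
    by (simp add: power2_eq_square algebra_simps)
  moreover have "(Ap_im x)\<^sup>2 \<le> 3 * ((Y2' x)\<^sup>2 + kr\<^sup>2 * (Y2 x)\<^sup>2 + ki\<^sup>2 * (Y1 x)\<^sup>2)"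
    unfolding Ap_im_def using sum_squares_ge_zero[of "Y2' x - kr * Y2 x" "Y2' x - ki * Y1 x"]
      sum_squares_ge_zero[of "kr * Y2 x - ki * Y1 x" 0]
    by (simp add: power2_eq_square algebra_simps)
  moreover have "3 * ((Y1' x)\<^sup>2 + kr\<^sup>2 * (Y1 x)\<^sup>2 + ki\<^sup>2 * (Y2 x)\<^sup>2)
      + 3 * ((Y2' x)\<^sup>2 + kr\<^sup>2 * (Y2 x)\<^sup>2 + ki\<^sup>2 * (Y1 x)\<^sup>2)
      \<le> 3 * (1 + kr\<^sup>2 + ki\<^sup>2) * ((Y1 x)\<^sup>2 + (Y2 x)\<^sup>2 + (Y1' x)\<^sup>2 + (Y2' x)\<^sup>2)"
    using mult_right_mono[of "kr\<^sup>2" "1 + kr\<^sup>2 + ki\<^sup>2" "(Y1 x)\<^sup>2 + (Y2 x)\<^sup>2"]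
      mult_right_mono[of "ki\<^sup>2" "1 + kr\<^sup>2 + ki\<^sup>2" "(Y1 x)\<^sup>2 + (Y2 x)\<^sup>2"]
      mult_right_mono[of 1 "1 + kr\<^sup>2 + ki\<^sup>2" "(Y1' x)\<^sup>2 + (Y2' x)\<^sup>2"]
    by (simp add: algebra_simps)
  ultimately show ?thesis unfolding amp_plus_def by linarith
qed

text \<open>If \<open>amp_plus\<close> ever exceeded \<open>amp_minus\<close>, it would stay bounded below by a positive
  constant, contradicting square integrability of \<open>Y\<close> and \<open>Y'\<close>.\<close>

lemma amp_plus_le_amp_minus:
  assumes x: "x \<ge> R"
  shows "amp_plus x \<le> amp_minus x"
proof (rule ccontr)
  assume "\<not> amp_plus x \<le> amp_minus x"
  hence d: "0 < amp_plus x - amp_minus x" by simp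
  let ?K = "3 * (1 + kr\<^sup>2 + ki\<^sup>2)"
  have "\<forall>y\<ge>x. amp_plus x - amp_minus x
      \<le> ?K * ((Y1 y)\<^sup>2 + (Y2 y)\<^sup>2 + (Y1' y)\<^sup>2 + (Y2' y)\<^sup>2)"
    using amp_diff_mono[OF x] amp_plus_le_energy amp_nonneg by (smt (verit))
  moreover have "set_integrable lborel {R..}
      (\<lambda>y. ?K * ((Y1 y)\<^sup>2 + (Y2 y)\<^sup>2 + (Y1' y)\<^sup>2 + (Y2' y)\<^sup>2))"
    using energy_integrable by (rule set_integrable_mult_right)
  ultimately show False
    using set_integrable_atLeast_not_bounded_below[OF _ x d] by blast
qed

lemma amp_minus_exp_decay:
  assumes "x \<ge> R"
  shows "amp_minus x * exp (2 * s * x) \<le> amp_minus R * exp (2 * s * R)"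
proof (rule exp_weighted_antimono[OF amp_minus_deriv _ assms])
  fix t assume t: "t \<ge> R"
  have "\<bar>Am_re t * F_re t + Am_im t * F_im t\<bar> \<le> \<epsilon> * (amp_plus t + amp_minus t)"
    using forcing_pairing_le[OF t amp_components_le(2)] .
  also have "\<dots> \<le> \<epsilon> * (2 * amp_minus t)"
    using amp_plus_le_amp_minus[OF t] eps_nonneg by (intro mult_left_mono) auto
  also have "\<dots> \<le> (kr - s) * amp_minus t"
    using eps_le amp_nonneg[of t] mult_right_mono[of "2 * \<epsilon>" "kr - s" "amp_minus t"]
    by (simp add: algebra_simps)
  finally show "- 2 * kr * amp_minus t - 2 * (Am_re t * F_re t + Am_im t * F_im t)
      \<le> - (2 * s) * amp_minus t"
    by (simp add: abs_le_iff algebra_simps)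
qed

lemma exp_decay:
  obtains C where "\<And>x. x \<ge> R \<Longrightarrow> (Y1 x)\<^sup>2 + (Y2 x)\<^sup>2 \<le> C * exp (- (2 * s) * x)"
    and "\<And>x. x \<ge> R \<Longrightarrow> (Y1' x)\<^sup>2 + (Y2' x)\<^sup>2 \<le> C * exp (- (2 * s) * x)"
proof -
  define C where "C = amp_minus R * exp (2 * s * R)"
  have C: "0 \<le> C" unfolding C_def using amp_nonneg by simp
  have amp: "amp_minus x \<le> C * exp (- (2 * s) * x)" if "x \<ge> R" for x
    using amp_minus_exp_decay[OF that] by (simp add: C_def exp_minus field_simps)
  show ?thesis
  proof (rule that[of "C / kr\<^sup>2 + C"])
    fix x assume x: "x \<ge> R"
    have "2 * kr\<^sup>2 * ((Y1 x)\<^sup>2 + (Y2 x)\<^sup>2) \<le> 2 * amp_minus x"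
      using Y_sq_le_amp[of x] amp_plus_le_amp_minus[OF x] by linarith
    hence "(Y1 x)\<^sup>2 + (Y2 x)\<^sup>2 \<le> amp_minus x / kr\<^sup>2" using kr_pos by (simp add: field_simps)
    also have "\<dots> \<le> C / kr\<^sup>2 * exp (- (2 * s) * x)" using amp[OF x] by (simp add: divide_right_mono)
    also have "\<dots> \<le> (C / kr\<^sup>2 + C) * exp (- (2 * s) * x)" using C by (simp add: field_simps)
    finally show "(Y1 x)\<^sup>2 + (Y2 x)\<^sup>2 \<le> (C / kr\<^sup>2 + C) * exp (- (2 * s) * x)" .
    have "(Y1' x)\<^sup>2 + (Y2' x)\<^sup>2 \<le> amp_minus x"
      using Y'_sq_le_amp[of x] amp_plus_le_amp_minus[OF x] by argo
    also have "\<dots> \<le> C * exp (- (2 * s) * x)" by (rule amp[OF x])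
    also have "\<dots> \<le> (C / kr\<^sup>2 + C) * exp (- (2 * s) * x)" using C kr_pos by (intro mult_right_mono) auto
    finally show "(Y1' x)\<^sup>2 + (Y2' x)\<^sup>2 \<le> (C / kr\<^sup>2 + C) * exp (- (2 * s) * x)" .
  qed
qed

end

section \<open>The ground state\<close>

lemma cosh_le_exp_abs: "cosh (y::real) \<le> exp \<bar>y\<bar>"
proof -
  have "exp (- \<bar>y\<bar>) \<le> exp \<bar>y\<bar>" by simp
  thus ?thesis unfolding cosh_def by (cases "y \<ge> 0") auto
qed

lemma Qwg_pos:
  assumes "p > 1" and "\<omega> > 0"
  shows "Qwg p \<omega> \<gamma> x > 0"
  using assms unfolding Qwg_def by simp

lemma Qwg_powr:
  assumes "p > 1" and "\<omega> > 0"
  shows "Qwg p \<omega> \<gamma> x powr (p - 1) =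
    (p + 1) * \<omega> / 2 * (1 / cosh ((p - 1) * sqrt \<omega> / 2 * \<bar>x\<bar> + artanh (\<gamma> / (2 * sqrt \<omega>))))\<^sup>2"
  using assms unfolding Qwg_def powr_powr by simp

lemma Qwg_powr_tendsto_0:
  assumes "p > 1" and "\<omega> > 0"
  shows "((\<lambda>x. Qwg p \<omega> \<gamma> x powr (p - 1)) \<longlongrightarrow> 0) at_top"
proof -
  define A b a where "A = (p + 1) * \<omega> / 2" and "b = (p - 1) * sqrt \<omega> / 2"
    and "a = artanh (\<gamma> / (2 * sqrt \<omega>))"
  have "b > 0" unfolding b_def using assms by simp
  hence "((\<lambda>x. A * (1 / ((exp (b * x + a) + exp (- (b * x + a))) / 2))\<^sup>2) \<longlongrightarrow> 0) at_top"
    by real_asymp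
  hence "((\<lambda>x. A * (1 / cosh (b * x + a))\<^sup>2) \<longlongrightarrow> 0) at_top"
    by (simp add: cosh_def)
  moreover have "\<forall>\<^sub>F x in at_top. A * (1 / cosh (b * x + a))\<^sup>2 = Qwg p \<omega> \<gamma> x powr (p - 1)"
    using eventually_ge_at_top[of 0]
    by eventually_elim (simp add: Qwg_powr[OF assms] A_def b_def a_def)
  ultimately show ?thesis by (rule Lim_transform_eventually)
qed

lemma Qwg_ge_exp:
  assumes p: "p > 1" and "\<omega> > 0"
  obtains c where "c > 0" and "\<And>x. c * exp (- sqrt \<omega> * \<bar>x\<bar>) \<le> Qwg p \<omega> \<gamma> x"
proof
  define A b a where "A = (p + 1) * \<omega> / 2" and "b = (p - 1) * sqrt \<omega> / 2"
    and "a = artanh (\<gamma> / (2 * sqrt \<omega>))"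
  have A: "A > 0" and b: "b > 0" unfolding A_def b_def using assms by simp_all
  have Q: "Qwg p \<omega> \<gamma> x = (A * (1 / cosh (b * \<bar>x\<bar> + a))\<^sup>2) powr (1 / (p - 1))" for x
    unfolding Qwg_def A_def b_def a_def by simp
  show "(A * exp (- 2 * \<bar>a\<bar>)) powr (1 / (p - 1)) > 0" using A by simp
  fix x
  have "0 \<le> b * \<bar>x\<bar>" using b by simp
  hence "\<bar>b * \<bar>x\<bar> + a\<bar> \<le> b * \<bar>x\<bar> + \<bar>a\<bar>" by (auto simp: abs_le_iff)
  hence "cosh (b * \<bar>x\<bar> + a) \<le> exp (b * \<bar>x\<bar> + \<bar>a\<bar>)"
    using cosh_le_exp_abs[of "b * \<bar>x\<bar> + a"] by (meson exp_le_cancel_iff order_trans)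
  hence "(1 / exp (b * \<bar>x\<bar> + \<bar>a\<bar>))\<^sup>2 \<le> (1 / cosh (b * \<bar>x\<bar> + a))\<^sup>2"
    by (intro power_mono divide_left_mono) auto
  moreover have "(1 / exp (b * \<bar>x\<bar> + \<bar>a\<bar>))\<^sup>2 = exp (- 2 * \<bar>a\<bar>) * exp (- 2 * b * \<bar>x\<bar>)"
    by (simp add: power2_eq_square exp_minus field_simps flip: exp_add)
  ultimately have le: "A * (exp (- 2 * \<bar>a\<bar>) * exp (- 2 * b * \<bar>x\<bar>)) \<le> A * (1 / cosh (b * \<bar>x\<bar> + a))\<^sup>2"
    using A by simp
  have "(A * exp (- 2 * \<bar>a\<bar>)) powr (1 / (p - 1)) * exp (- sqrt \<omega> * \<bar>x\<bar>)
      = (A * exp (- 2 * \<bar>a\<bar>)) powr (1 / (p - 1)) * exp (- 2 * b * \<bar>x\<bar>) powr (1 / (p - 1))"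
    unfolding exp_powr_real using p unfolding b_def by (simp add: field_simps)
  also have "\<dots> = (A * (exp (- 2 * \<bar>a\<bar>) * exp (- 2 * b * \<bar>x\<bar>))) powr (1 / (p - 1))"
    using A by (simp add: powr_mult mult.assoc)
  also have "\<dots> \<le> Qwg p \<omega> \<gamma> x" unfolding Q using le p A by (intro powr_mono2) auto
  finally show "(A * exp (- 2 * \<bar>a\<bar>)) powr (1 / (p - 1)) * exp (- sqrt \<omega> * \<bar>x\<bar>) \<le> Qwg p \<omega> \<gamma> x" .
qed

lemma Qwg_weighted_norm_bounded:
  fixes u v :: "real \<Rightarrow> real"
  assumes p: "p > 1" and w: "\<omega> > 0"
    and "\<exists>C. \<forall>x. x \<noteq> 0 \<longrightarrow> (u x)\<^sup>2 + (v x)\<^sup>2 \<le> C * exp (- (2 * s) * \<bar>x\<bar>)"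
  shows "\<exists>M. \<forall>x. x \<noteq> 0 \<longrightarrow>
      norm (complex_of_real (exp ((s - sqrt \<omega>) * \<bar>x\<bar>) / Qwg p \<omega> \<gamma> x) * Complex (u x) (v x)) \<le> M
      \<and> norm (complex_of_real (exp ((s - sqrt \<omega>) * \<bar>x\<bar>) / Qwg p \<omega> \<gamma> x) * cnj (Complex (u x) (v x))) \<le> M"
proof -
  obtain c where "c > 0" and Q: "\<And>x. c * exp (- sqrt \<omega> * \<bar>x\<bar>) \<le> Qwg p \<omega> \<gamma> x"
    using Qwg_ge_exp[OF p w] by blast
  obtain C where "\<forall>x. x \<noteq> 0 \<longrightarrow> (u x)\<^sup>2 + (v x)\<^sup>2 \<le> C * exp (- (2 * s) * \<bar>x\<bar>)"
    using assms(3) by blast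
  then obtain M where M: "\<And>x. x \<noteq> 0 \<Longrightarrow>
      exp ((s - sqrt \<omega>) * \<bar>x\<bar>) / Qwg p \<omega> \<gamma> x * sqrt ((u x)\<^sup>2 + (v x)\<^sup>2) \<le> M"
    using exp_weighted_bound[OF _ \<open>c > 0\<close> Q] by blast
  show ?thesis
  proof (intro exI[of _ M] allI impI)
    fix x :: real assume "x \<noteq> 0"
    have r: "0 \<le> exp ((s - sqrt \<omega>) * \<bar>x\<bar>) / Qwg p \<omega> \<gamma> x"
      using Qwg_pos[OF p w] by (simp add: less_imp_le)
    show "norm (complex_of_real (exp ((s - sqrt \<omega>) * \<bar>x\<bar>) / Qwg p \<omega> \<gamma> x) * Complex (u x) (v x)) \<le> M
      \<and> norm (complex_of_real (exp ((s - sqrt \<omega>) * \<bar>x\<bar>) / Qwg p \<omega> \<gamma> x) * cnj (Complex (u x) (v x))) \<le> M"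
      unfolding norm_of_real_mult_Complex[OF r] using M[OF \<open>x \<noteq> 0\<close>] by simp
  qed
qed

section \<open>Decay of the eigenfunctions\<close>

lemma D_even_bounded_near_0:
  assumes "D_even \<gamma> f"
  obtains B where "\<And>x. x \<in> {0<..R} \<Longrightarrow> (f x)\<^sup>2 \<le> B \<and> (deriv f x)\<^sup>2 \<le> B"
proof -
  obtain a where lim: "(deriv f \<longlongrightarrow> a) (at_right 0)"
    using assms unfolding D_even_def by blast
  have "isCont (deriv f) x" if "x > 0" for x
    using assms that unfolding D_even_def by (auto intro: differentiable_imp_continuous_within)
  then obtain B1 where B1: "\<And>x. x \<in> {0<..R} \<Longrightarrow> \<bar>deriv f x\<bar> \<le> B1"
    using tendsto_at_right_0_abs_bounded[OF lim] by blast
  have "continuous_on {0..R} f"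
    using assms unfolding D_even_def by (auto intro: continuous_on_subset)
  then obtain B0 where B0: "\<And>x. x \<in> {0..R} \<Longrightarrow> \<bar>f x\<bar> \<le> B0"
    using continuous_on_Icc_abs_bounded by blast
  show ?thesis
  proof (rule that[of "(max B0 B1)\<^sup>2"])
    fix x assume "x \<in> {0<..R}"
    hence "\<bar>f x\<bar> \<le> max B0 B1" "\<bar>deriv f x\<bar> \<le> max B0 B1" using B0[of x] B1[of x] by auto
    moreover have "0 \<le> max B0 B1" using calculation(1) by linarith
    ultimately show "(f x)\<^sup>2 \<le> (max B0 B1)\<^sup>2 \<and> (deriv f x)\<^sup>2 \<le> (max B0 B1)\<^sup>2"
      by (simp add: power2_le_iff_abs_le)
  qed
qed

lemma D_even_deriv_sq_even:
  assumes "D_even \<gamma> f"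
  shows "(deriv f (- x))\<^sup>2 = (deriv f x)\<^sup>2"
proof (cases "x = 0")
  case False
  have "deriv f x = - deriv f (- x)"
    using assms False unfolding D_even_def by (intro deriv_even_fun) auto
  thus ?thesis by simp
qed simp

lemma even_eigpair_exp_decay_at_top:
  assumes p: "p > 1" and w: "\<omega> > 0" and "e > 0" and eig: "even_eigpair p \<omega> \<gamma> e Y1 Y2"
  obtains s R C where "sqrt \<omega> < s" and "R > 0"
    and "\<And>x. x \<ge> R \<Longrightarrow> (Y1 x)\<^sup>2 + (Y2 x)\<^sup>2 \<le> C * exp (- (2 * s) * x)"
    and "\<And>x. x \<ge> R \<Longrightarrow> (deriv Y1 x)\<^sup>2 + (deriv Y2 x)\<^sup>2 \<le> C * exp (- (2 * s) * x)"
proof -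
  obtain kr ki where kk1: "kr\<^sup>2 - ki\<^sup>2 = \<omega>" and kk2: "2 * kr * ki = e" and kr: "sqrt \<omega> < kr"
    using sqrt_complex_Re_gt[OF w] \<open>e > 0\<close> by (metis less_irrefl)
  define s \<epsilon> where "s = (kr + sqrt \<omega>) / 2" and "\<epsilon> = (kr - sqrt \<omega>) / 4"
  define V where "V x = Qwg p \<omega> \<gamma> x powr (p - 1)" for x
  have sqrt_pos: "0 < sqrt \<omega>" using w by simp
  hence pos: "0 < kr \<and> 0 < \<epsilon> \<and> sqrt \<omega> < s" unfolding \<epsilon>_def s_def using kr by argo
  have "\<forall>\<^sub>F x in at_top. V x < \<epsilon> * kr / p"
    using Qwg_powr_tendsto_0[OF p w] pos p unfolding V_def by (intro order_tendstoD) auto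
  then obtain R0 where R0: "\<And>x. x \<ge> R0 \<Longrightarrow> V x < \<epsilon> * kr / p"
    unfolding eventually_at_top_linorder by auto
  define R where "R = max R0 1"
  have R: "R > 0" unfolding R_def by simp
  note D = eig[unfolded even_eigpair_def D_even_def]
  have L2: "set_integrable lborel {R..} (\<lambda>x. (Y x)\<^sup>2)"
    if "integrable lborel (\<lambda>x. (Y x)\<^sup>2)" for Y :: "real \<Rightarrow> real"
    using that unfolding set_integrable_def by (intro integrable_mult_indicator) auto
  have L2': "set_integrable lborel {R..} (\<lambda>x. (deriv Y x)\<^sup>2)"
    if "set_integrable lborel (UNIV - {0}) (\<lambda>x. (deriv Y x)\<^sup>2)" for Y :: "real \<Rightarrow> real"
    by (rule set_integrable_subset[OF that]) (use R in auto)
  interpret perturbed_linear_system Y1 Y2 "deriv Y1" "deriv Y2" "deriv (deriv Y1)" "deriv (deriv Y2)"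
    V kr ki p \<epsilon> s R
  proof
    show "0 < kr" "1 \<le> p" "0 \<le> \<epsilon>" using pos p by auto
    show "0 \<le> s" using pos sqrt_pos by argo
    show "2 * \<epsilon> \<le> kr - s" unfolding s_def \<epsilon>_def by argo
    show "set_integrable lborel {R..}
        (\<lambda>x. (Y1 x)\<^sup>2 + (Y2 x)\<^sup>2 + (deriv Y1 x)\<^sup>2 + (deriv Y2 x)\<^sup>2)"
      using D by (intro set_integral_add L2 L2') auto
    fix x assume "R \<le> x"
    hence x: "x \<noteq> 0" and "V x < \<epsilon> * kr / p" using R0 R by (auto simp: R_def)
    thus "p * V x \<le> \<epsilon> * kr" using p by (simp add: field_simps)
    show "0 \<le> V x" unfolding V_def by simp
    show "(Y1 has_real_derivative deriv Y1 x) (at x)" "(Y2 has_real_derivative deriv Y2 x) (at x)"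
      "(deriv Y1 has_real_derivative deriv (deriv Y1) x) (at x)"
      "(deriv Y2 has_real_derivative deriv (deriv Y2) x) (at x)"
      using D x by (auto simp: DERIV_deriv_iff_real_differentiable)
    show "deriv (deriv Y1) x = (kr\<^sup>2 - ki\<^sup>2) * Y1 x - 2 * kr * ki * Y2 x - p * V x * Y1 x"
      using D x unfolding Lplus_def V_def kk1 kk2 by (auto simp: algebra_simps)
    show "deriv (deriv Y2) x = (kr\<^sup>2 - ki\<^sup>2) * Y2 x + 2 * kr * ki * Y1 x - V x * Y2 x"
      using D x unfolding Lminus_def V_def kk1 kk2 by (auto simp: algebra_simps)
  qed
  obtain C where "\<And>x. x \<ge> R \<Longrightarrow> (Y1 x)\<^sup>2 + (Y2 x)\<^sup>2 \<le> C * exp (- (2 * s) * x)"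
    and "\<And>x. x \<ge> R \<Longrightarrow> (deriv Y1 x)\<^sup>2 + (deriv Y2 x)\<^sup>2 \<le> C * exp (- (2 * s) * x)"
    using exp_decay by blast
  with pos R show ?thesis by (intro that) auto
qed

lemma even_eigpair_exp_decay:
  assumes "p > 1" and "\<omega> > 0" and "e > 0" and eig: "even_eigpair p \<omega> \<gamma> e Y1 Y2"
  obtains s where "sqrt \<omega> < s"
    and "\<exists>C. \<forall>x. x \<noteq> 0 \<longrightarrow> (Y1 x)\<^sup>2 + (Y2 x)\<^sup>2 \<le> C * exp (- (2 * s) * \<bar>x\<bar>)"
    and "\<exists>C. \<forall>x. x \<noteq> 0 \<longrightarrow> (deriv Y1 x)\<^sup>2 + (deriv Y2 x)\<^sup>2 \<le> C * exp (- (2 * s) * \<bar>x\<bar>)"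
proof -
  obtain s R C where s: "sqrt \<omega> < s" and "R > 0"
    and far: "\<And>x. x \<ge> R \<Longrightarrow> (Y1 x)\<^sup>2 + (Y2 x)\<^sup>2 \<le> C * exp (- (2 * s) * x)"
    and far': "\<And>x. x \<ge> R \<Longrightarrow> (deriv Y1 x)\<^sup>2 + (deriv Y2 x)\<^sup>2 \<le> C * exp (- (2 * s) * x)"
    using even_eigpair_exp_decay_at_top[OF assms] by blast
  have D: "D_even \<gamma> Y1" "D_even \<gamma> Y2" using eig unfolding even_eigpair_def by auto
  obtain B1 B2 where B1: "\<And>x. x \<in> {0<..R} \<Longrightarrow> (Y1 x)\<^sup>2 \<le> B1 \<and> (deriv Y1 x)\<^sup>2 \<le> B1"
    and B2: "\<And>x. x \<in> {0<..R} \<Longrightarrow> (Y2 x)\<^sup>2 \<le> B2 \<and> (deriv Y2 x)\<^sup>2 \<le> B2"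
    using D_even_bounded_near_0[OF D(1)] D_even_bounded_near_0[OF D(2)] by metis
  have "0 \<le> 2 * s" using s real_sqrt_ge_zero[of \<omega>] \<open>\<omega> > 0\<close> by linarith
  show ?thesis
  proof (rule that[OF s])
    show "\<exists>C. \<forall>x. x \<noteq> 0 \<longrightarrow> (Y1 x)\<^sup>2 + (Y2 x)\<^sup>2 \<le> C * exp (- (2 * s) * \<bar>x\<bar>)"
    proof (rule exp_bound_off_zero[OF _ far _ \<open>0 \<le> 2 * s\<close>])
      show "(Y1 (- x))\<^sup>2 + (Y2 (- x))\<^sup>2 = (Y1 x)\<^sup>2 + (Y2 x)\<^sup>2" for x
        using D unfolding D_even_def by simp
      show "(Y1 x)\<^sup>2 + (Y2 x)\<^sup>2 \<le> B1 + B2" if "x \<in> {0<..R}" for x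
        using B1[OF that] B2[OF that] by linarith
    qed
    show "\<exists>C. \<forall>x. x \<noteq> 0 \<longrightarrow> (deriv Y1 x)\<^sup>2 + (deriv Y2 x)\<^sup>2 \<le> C * exp (- (2 * s) * \<bar>x\<bar>)"
    proof (rule exp_bound_off_zero[OF _ far' _ \<open>0 \<le> 2 * s\<close>])
      show "(deriv Y1 (- x))\<^sup>2 + (deriv Y2 (- x))\<^sup>2 = (deriv Y1 x)\<^sup>2 + (deriv Y2 x)\<^sup>2" for x
        using D_even_deriv_sq_even[OF D(1)] D_even_deriv_sq_even[OF D(2)] by simp
      show "(deriv Y1 x)\<^sup>2 + (deriv Y2 x)\<^sup>2 \<le> B1 + B2" if "x \<in> {0<..R}" for x
        using B1[OF that] B2[OF that] by linarith
    qed
  qed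
qed

theorem lemma2p21:
  fixes p \<omega> \<gamma> e :: real and Y1 Y2 :: "real \<Rightarrow> real"
  assumes "\<gamma> < 0" and "p > 5" and "\<omega> > \<gamma>\<^sup>2 / 4"
    and "e > 0" and "even_eigpair p \<omega> \<gamma> e Y1 Y2"
    and "\<And>lam f1 f2. lam > 0 \<Longrightarrow> even_eigpair p \<omega> \<gamma> lam f1 f2 \<Longrightarrow>
           lam = e \<and> (\<exists>c::real. f1 = (\<lambda>x. c * Y1 x) \<and> f2 = (\<lambda>x. c * Y2 x))"
  shows "\<exists>\<eta>>0. \<forall>\<alpha>\<in>{0::nat, 1}. \<forall>Y\<in>{(\<lambda>x. Complex ((deriv ^^ \<alpha>) Y1 x) ((deriv ^^ \<alpha>) Y2 x)),
                                   (\<lambda>x. cnj (Complex ((deriv ^^ \<alpha>) Y1 x) ((deriv ^^ \<alpha>) Y2 x)))}.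
           \<exists>C. \<forall>x. x \<noteq> 0 \<longrightarrow> norm (complex_of_real (exp (\<eta> * \<bar>x\<bar>) / Qwg p \<omega> \<gamma> x) * Y x) \<le> C"
proof -
  have p: "p > 1" using assms(2) by simp
  have w: "\<omega> > 0" using assms(3) zero_le_power2[of \<gamma>] by linarith
  obtain s where s: "sqrt \<omega> < s"
    and decay: "\<exists>C. \<forall>x. x \<noteq> 0 \<longrightarrow> (Y1 x)\<^sup>2 + (Y2 x)\<^sup>2 \<le> C * exp (- (2 * s) * \<bar>x\<bar>)"
    and decay': "\<exists>C. \<forall>x. x \<noteq> 0 \<longrightarrow> (deriv Y1 x)\<^sup>2 + (deriv Y2 x)\<^sup>2 \<le> C * exp (- (2 * s) * \<bar>x\<bar>)"
    using even_eigpair_exp_decay[OF p w assms(4,5)] by blast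
  have "s - sqrt \<omega> > 0" using s by simp
  thus ?thesis
    using Qwg_weighted_norm_bounded[OF p w decay] Qwg_weighted_norm_bounded[OF p w decay']
    by (intro exI[of _ "s - sqrt \<omega>"]) (simp, blast)
qed

end
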